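(* Let $k\ge2$ be an integer. For every integer $n>k-1$, $$D_k(n)+D_{k-1}(n)=D_{k-1}(n-k+1)+2A(n).$$
   Context: $A(n)$ is the number of partitions of $n$ into distinct parts. For $j\ge1$, $D_j(n)$ is the number of partitions of $n$ into non-negative parts (the part $0$ is allowed) in which the smallest part appears exactly $j$ times and no other part is repeated, with $D_j(0)=1$. *)

theory Defs
  imports Main "HOL-Library.Multiset"
begin

definition A :: "nat \<Rightarrow> nat" where
  "A n = card {M :: nat multiset. (\<forall>x\<in>#M. x > 0) \<and> sum_mset M = n \<and> (\<forall>x. count M x \<le> 1)}"

text \<open>Partitions into non-negative parts (0 allowed), smallest part occurring exactly j times,
  every other part occurring at most once; D j 0 = 1 by convention.\<close>

definition D :: "nat \<Rightarrow> nat \<Rightarrow> nat" where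
  "D j n = (if n = 0 then 1 else
     card {M :: nat multiset. M \<noteq> {#} \<and> sum_mset M = n \<and>
        count M (Min (set_mset M)) = j \<and>
        (\<forall>x\<in>#M. x \<noteq> Min (set_mset M) \<longrightarrow> count M x \<le> 1)})"

end

theory Submission
  imports Defs
begin

text \<open>A partition counted by \<open>D j n\<close> whose smallest part is 0 is a partition of \<open>n\<close> into
  distinct positive parts padded with \<open>j\<close> zeros, so \<open>D j n = A n + P j n\<close>, where
  \<open>P j n = card (rep_pos_min_parts j n)\<close> counts those with positive smallest part.
  Adding 1 to each of the \<open>k - 1\<close> copies of the smallest part maps the partitions counted by
  \<open>D (k - 1) (n - k + 1)\<close> bijectively onto those counted by \<open>P k n + P (k - 1) n\<close>: the new
  smallest part occurs \<open>k\<close> or \<open>k - 1\<close> times according to whether it was already a part.\<close>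

definition repeated_min :: "nat \<Rightarrow> nat \<Rightarrow> nat multiset \<Rightarrow> bool" where
  "repeated_min j s M \<longleftrightarrow>
     count M s = j \<and> (\<forall>x<s. count M x = 0) \<and> (\<forall>x>s. count M x \<le> 1)"

definition rep_min_parts :: "nat \<Rightarrow> nat \<Rightarrow> nat multiset set" where
  "rep_min_parts j n = {M. (\<exists>s. repeated_min j s M) \<and> sum_mset M = n}"

definition rep_pos_min_parts :: "nat \<Rightarrow> nat \<Rightarrow> nat multiset set" where
  "rep_pos_min_parts j n = {M. (\<exists>s>0. repeated_min j s M) \<and> sum_mset M = n}"

lemma Min_repeated_min:
  assumes "repeated_min j s M" and "0 < j"
  shows "Min (set_mset M) = s"
proof (rule Min_eqI)
  show "s \<in># M"
    using assms by (simp add: repeated_min_def flip: count_greater_zero_iff)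
  show "s \<le> x" if "x \<in># M" for x
  proof (rule ccontr)
    assume "\<not> s \<le> x"
    with assms(1) have "count M x = 0"
      by (simp add: repeated_min_def)
    with that show False
      by (simp add: count_eq_zero_iff)
  qed
qed simp

lemma repeated_min_unique:
  assumes "repeated_min j s M" "repeated_min j' s' M" and "0 < j" "0 < j'"
  shows "j = j'" and "s = s'"
  using assms Min_repeated_min[of j s M] Min_repeated_min[of j' s' M]
  by (auto simp: repeated_min_def)

lemma ex_repeated_min_iff:
  assumes "0 < j"
  shows "(\<exists>s. repeated_min j s M) \<longleftrightarrow>
    M \<noteq> {#} \<and> count M (Min (set_mset M)) = j \<and>
    (\<forall>x\<in>#M. x \<noteq> Min (set_mset M) \<longrightarrow> count M x \<le> 1)"
proof
  assume "\<exists>s. repeated_min j s M"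
  then obtain s where s: "repeated_min j s M" ..
  then have "Min (set_mset M) = s"
    using assms by (rule Min_repeated_min)
  moreover have "s < x" if "x \<in># M" "x \<noteq> s" for x
    using Min_le[of "set_mset M" x] that \<open>Min (set_mset M) = s\<close> by simp
  ultimately show "M \<noteq> {#} \<and> count M (Min (set_mset M)) = j \<and>
      (\<forall>x\<in>#M. x \<noteq> Min (set_mset M) \<longrightarrow> count M x \<le> 1)"
    using s assms by (auto simp: repeated_min_def)
next
  assume M: "M \<noteq> {#} \<and> count M (Min (set_mset M)) = j \<and>
    (\<forall>x\<in>#M. x \<noteq> Min (set_mset M) \<longrightarrow> count M x \<le> 1)"
  have "repeated_min j (Min (set_mset M)) M"
    unfolding repeated_min_def
  proof (intro conjI allI impI)
    fix x
    show "x < Min (set_mset M) \<Longrightarrow> count M x = 0"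
      by (meson Min_le finite_set_mset count_inI leD)
    show "Min (set_mset M) < x \<Longrightarrow> count M x \<le> 1"
      using M by (metis count_inI less_irrefl zero_le)
  qed (use M in simp)
  then show "\<exists>s. repeated_min j s M" ..
qed

lemma D_eq_card_rep_min_parts:
  assumes "0 < j" and "0 < n"
  shows "D j n = card (rep_min_parts j n)"
  using assms ex_repeated_min_iff[OF assms(1)]
  by (auto simp: D_def rep_min_parts_def intro!: arg_cong[where f = card])

lemma size_le_count_zero_plus_sum_mset: "size M \<le> count M 0 + sum_mset (M :: nat multiset)"
  by (induction M) auto

lemma member_le_sum_mset: "x \<in># M \<Longrightarrow> x \<le> sum_mset (M :: nat multiset)"
  by (metis sum_mset.remove le_add1)

lemma finite_sum_mset_eq_count_zero_le:
  "finite {M :: nat multiset. count M 0 \<le> c \<and> sum_mset M = n}"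
proof (rule finite_subset)
  show "{M. count M 0 \<le> c \<and> sum_mset M = n} \<subseteq> (\<Union>i\<le>c + n. multisets_of_size {..n} i)"
  proof clarify
    fix M :: "nat multiset" assume "count M 0 \<le> c"
    then have "size M \<le> c + sum_mset M"
      using size_le_count_zero_plus_sum_mset[of M] by linarith
    moreover have "set_mset M \<subseteq> {..sum_mset M}"
      using member_le_sum_mset by blast
    ultimately show "M \<in> (\<Union>i\<le>c + sum_mset M. multisets_of_size {..sum_mset M} i)"
      by (auto simp: multisets_of_size_def)
  qed
qed auto

lemma finite_rep_min_parts: "finite (rep_min_parts j n)"
proof (rule finite_subset)
  show "rep_min_parts j n \<subseteq> {M. count M 0 \<le> j \<and> sum_mset M = n}"
    by (auto simp: rep_min_parts_def repeated_min_def)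
qed (rule finite_sum_mset_eq_count_zero_le)

lemma card_zero_min_parts: "card {M. repeated_min j 0 M \<and> sum_mset M = n} = A n"
proof -
  let ?distinct =
    "{M :: nat multiset. (\<forall>x\<in>#M. x > 0) \<and> sum_mset M = n \<and> (\<forall>x. count M x \<le> 1)}"
  let ?pad = "\<lambda>M. M + replicate_mset j (0::nat)"
  have "bij_betw ?pad ?distinct {M. repeated_min j 0 M \<and> sum_mset M = n}"
  proof (rule bij_betw_byWitness[where f' = "filter_mset (\<lambda>x. x > 0)"]; (rule ballI)?)
    show "?pad ` ?distinct \<subseteq> {M. repeated_min j 0 M \<and> sum_mset M = n}"
      by (auto simp: repeated_min_def count_eq_zero_iff)
    show "filter_mset (\<lambda>x. x > 0) ` {M. repeated_min j 0 M \<and> sum_mset M = n} \<subseteq> ?distinct"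
    proof (rule image_subsetI)
      fix M assume "M \<in> {M. repeated_min j 0 M \<and> sum_mset M = n}"
      then have M: "repeated_min j 0 M" and sum: "sum_mset M = n"
        by simp_all
      then have padded: "M = ?pad (filter_mset (\<lambda>x. x > 0) M)"
        by (auto simp: repeated_min_def multiset_eq_iff)
      have "sum_mset (filter_mset (\<lambda>x. x > 0) M) = sum_mset M"
        by (subst padded) simp
      with M sum show "filter_mset (\<lambda>x. x > 0) M \<in> ?distinct"
        by (auto simp: repeated_min_def)
    qed
    show "filter_mset (\<lambda>x. x > 0) (?pad M) = M" if "M \<in> ?distinct" for M
      using that by (auto simp: multiset_eq_iff count_eq_zero_iff)
    show "?pad (filter_mset (\<lambda>x. x > 0) M) = M"
      if "M \<in> {M. repeated_min j 0 M \<and> sum_mset M = n}" for M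
      using that by (auto simp: repeated_min_def multiset_eq_iff)
  qed
  then show ?thesis
    by (simp add: bij_betw_same_card A_def)
qed

lemma card_rep_min_parts_eq:
  assumes "0 < j"
  shows "card (rep_min_parts j n) = A n + card (rep_pos_min_parts j n)"
proof -
  let ?zero = "{M. repeated_min j 0 M \<and> sum_mset M = n}"
  have split: "rep_min_parts j n = ?zero \<union> rep_pos_min_parts j n"
    unfolding rep_min_parts_def rep_pos_min_parts_def using neq0_conv by blast
  have "?zero \<inter> rep_pos_min_parts j n = {}"
    using assms by (auto simp: rep_pos_min_parts_def repeated_min_def)
  moreover have "finite ?zero" "finite (rep_pos_min_parts j n)"
    using finite_rep_min_parts[of j n] unfolding split by auto
  ultimately show ?thesis
    by (simp add: split card_Un_disjoint card_zero_min_parts)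
qed

definition raise_min :: "nat \<Rightarrow> nat multiset \<Rightarrow> nat multiset" where
  "raise_min r M =
     M - replicate_mset r (Min (set_mset M)) + replicate_mset r (Suc (Min (set_mset M)))"

definition lower_min :: "nat \<Rightarrow> nat multiset \<Rightarrow> nat multiset" where
  "lower_min r M =
     M - replicate_mset r (Min (set_mset M)) + replicate_mset r (Min (set_mset M) - 1)"

lemma repeated_min_raise_min:
  assumes M: "repeated_min r s M" and "0 < r"
  shows "repeated_min (r + count M (Suc s)) (Suc s) (raise_min r M)"
    and "sum_mset (raise_min r M) = sum_mset M + r"
    and "lower_min r (raise_min r M) = M"
proof -
  define R where "R = M - replicate_mset r s"
  have M_eq: "M = R + replicate_mset r s"
    using M by (simp add: R_def repeated_min_def subseteq_mset_def)
  have raise: "raise_min r M = R + replicate_mset r (Suc s)"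
    using M_eq Min_repeated_min[OF assms] by (simp add: raise_min_def)
  show raised: "repeated_min (r + count M (Suc s)) (Suc s) (raise_min r M)"
    using M by (auto simp: raise R_def repeated_min_def)
  show "sum_mset (raise_min r M) = sum_mset M + r"
    unfolding raise by (subst M_eq) simp
  have "Min (set_mset (raise_min r M)) = Suc s"
    using Min_repeated_min[OF raised] assms by simp
  then have "lower_min r (raise_min r M) =
      raise_min r M - replicate_mset r (Suc s) + replicate_mset r s"
    by (simp add: lower_min_def)
  then show "lower_min r (raise_min r M) = M"
    unfolding raise using M_eq by simp
qed

lemma repeated_min_lower_min:
  assumes M: "repeated_min c (Suc s) M" and "r \<le> c" "c \<le> Suc r" "0 < r"
  shows "repeated_min r s (lower_min r M)"
    and "sum_mset (lower_min r M) + r = sum_mset M"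
    and "raise_min r (lower_min r M) = M"
proof -
  define R where "R = M - replicate_mset r (Suc s)"
  have M_eq: "M = R + replicate_mset r (Suc s)"
    using M assms(2) by (simp add: R_def repeated_min_def subseteq_mset_def)
  have lower: "lower_min r M = R + replicate_mset r s"
    using M_eq Min_repeated_min[OF M] assms by (simp add: lower_min_def)
  show lowered: "repeated_min r s (lower_min r M)"
    using M assms(3) by (auto simp: lower R_def repeated_min_def)
  show "sum_mset (lower_min r M) + r = sum_mset M"
    unfolding lower by (subst M_eq) simp
  have "Min (set_mset (lower_min r M)) = s"
    using Min_repeated_min[OF lowered] assms by simp
  then have "raise_min r (lower_min r M) =
      lower_min r M - replicate_mset r s + replicate_mset r (Suc s)"
    by (simp add: raise_min_def)
  then show "raise_min r (lower_min r M) = M"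
    unfolding lower using M_eq by simp
qed

lemma bij_betw_raise_min:
  assumes "0 < r"
  shows "bij_betw (raise_min r) (rep_min_parts r m)
    (rep_pos_min_parts (Suc r) (m + r) \<union> rep_pos_min_parts r (m + r))"
proof (rule bij_betw_byWitness[where f' = "lower_min r"]; (rule ballI)?)
  show "lower_min r (raise_min r M) = M" if "M \<in> rep_min_parts r m" for M
    using that assms repeated_min_raise_min(3) by (auto simp: rep_min_parts_def)
  show "raise_min r ` rep_min_parts r m \<subseteq>
      rep_pos_min_parts (Suc r) (m + r) \<union> rep_pos_min_parts r (m + r)"
  proof (rule image_subsetI)
    fix M assume "M \<in> rep_min_parts r m"
    then obtain s where M: "repeated_min r s M" "sum_mset M = m"
      by (auto simp: rep_min_parts_def)
    have "raise_min r M \<in> rep_pos_min_parts (r + count M (Suc s)) (m + r)"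
      using repeated_min_raise_min[OF M(1) assms] M(2) unfolding rep_pos_min_parts_def
      by (auto intro: exI[of _ "Suc s"])
    moreover have "count M (Suc s) \<le> 1"
      using M(1) by (simp add: repeated_min_def)
    ultimately show
      "raise_min r M \<in> rep_pos_min_parts (Suc r) (m + r) \<union> rep_pos_min_parts r (m + r)"
      by (cases "count M (Suc s)") auto
  qed
  have lower: "lower_min r M \<in> rep_min_parts r m \<and> raise_min r (lower_min r M) = M"
    if M_in: "M \<in> rep_pos_min_parts (Suc r) (m + r) \<union> rep_pos_min_parts r (m + r)" for M
  proof -
    obtain c s where M: "repeated_min c s M" "sum_mset M = m + r" and "0 < s"
      and c: "c = Suc r \<or> c = r"
      using M_in unfolding rep_pos_min_parts_def by blast
    then obtain t where "s = Suc t"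
      using gr0_conv_Suc by blast
    have "r \<le> c" "c \<le> Suc r"
      using c by auto
    note lowered = repeated_min_lower_min[OF M(1)[unfolded \<open>s = Suc t\<close>] this assms]
    then show ?thesis
      using M(2) by (auto simp: rep_min_parts_def)
  qed
  show "raise_min r (lower_min r M) = M"
    if "M \<in> rep_pos_min_parts (Suc r) (m + r) \<union> rep_pos_min_parts r (m + r)" for M
    using lower[OF that] ..
  show "lower_min r ` (rep_pos_min_parts (Suc r) (m + r) \<union> rep_pos_min_parts r (m + r))
      \<subseteq> rep_min_parts r m"
    using lower by blast
qed

lemma card_rep_min_parts_eq_card_rep_pos_min_parts:
  assumes "0 < r"
  shows "card (rep_min_parts r m) =
    card (rep_pos_min_parts (Suc r) (m + r)) + card (rep_pos_min_parts r (m + r))"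
proof -
  have "finite (rep_pos_min_parts j n)" for j n
    by (rule finite_subset[OF _ finite_rep_min_parts[of j n]])
      (auto simp: rep_pos_min_parts_def rep_min_parts_def)
  moreover have "rep_pos_min_parts (Suc r) (m + r) \<inter> rep_pos_min_parts r (m + r) = {}"
    using assms repeated_min_unique(1)[of "Suc r" _ _ r] by (auto simp: rep_pos_min_parts_def)
  ultimately show ?thesis
    using bij_betw_same_card[OF bij_betw_raise_min[OF assms]] by (simp add: card_Un_disjoint)
qed

theorem theorem12:
  fixes k n :: nat
  assumes "k \<ge> 2" and "n > k - 1"
  shows "D k n + D (k - 1) n = D (k - 1) (n - k + 1) + 2 * A n"
proof -
  obtain r where r: "0 < r" "k = Suc r"
    using assms(1) by (intro that[of "k - 1"]) auto
  define m where "m = n - r"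
  have m: "0 < m" "n = m + r" "n - k + 1 = m"
    using assms r by (auto simp: m_def)
  have "D k n = A n + card (rep_pos_min_parts (Suc r) n)"
    using m r by (simp add: D_eq_card_rep_min_parts card_rep_min_parts_eq)
  moreover have "D (k - 1) n = A n + card (rep_pos_min_parts r n)"
    using m r by (simp add: D_eq_card_rep_min_parts card_rep_min_parts_eq)
  moreover have "D (k - 1) (n - k + 1) =
      card (rep_pos_min_parts (Suc r) n) + card (rep_pos_min_parts r n)"
    using m r
    by (simp add: D_eq_card_rep_min_parts card_rep_min_parts_eq_card_rep_pos_min_parts)
  ultimately show ?thesis
    by simp
qed

end
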